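(* (Σ-completeness of $\mathsf{WSeq}$.) For every $\Sigma$-sentence $\phi$ of $\mathcal{L}$, if $\mathfrak{S}\models\phi$ then $\mathsf{WSeq}\vdash\phi$.
   Context: $\mathcal{L}$ is the first-order language $\{e, \vdash, \circ\}$ with $e$ a constant symbol and $\vdash$ (written infix), $\circ$ binary function symbols. Sequences: $()$ is a sequence, and for $n>0$, if $s_1,\ldots,s_n$ are sequences then $(s_1,\ldots,s_n)$ is a sequence. The standard structure $\mathfrak{S}$ has universe all sequences, $e^{\mathfrak{S}}=()$, $(s_1,\ldots,s_n)\vdash^{\mathfrak{S}} t=(s_1,\ldots,s_n,t)$, and $\circ^{\mathfrak{S}}$ is concatenation of sequences. The sequeral $\overline{s}$ of a sequence is the term with $\overline{()}=e$ and $\overline{(s_1,\ldots,s_n)}=(\ldots((e\vdash\overline{s_1})\vdash\overline{s_2})\ldots)\vdash\overline{s_n}$. For terms $t_1,t_2$, $t_1\sqsubseteq t_2$ abbreviates $\exists y[t_1\circ y=t_2]$, $t_1\not\sqsubseteq t_2$ abbreviates its negation, and $\forall x\sqsubseteq t[\phi]$ abbreviates $\forall x[x\sqsubseteq t\rightarrow\phi]$. The $\Sigma$-formulas are defined inductively: atomic formulas and negations of atomic formulas; $s\sqsubseteq t$ and $s\not\sqsubseteq t$ for terms $s,t$; $\alpha\wedge\beta$ and $\alpha\vee\beta$ for $\Sigma$-formulas $\alpha,\beta$; $\exists x[\phi]$ for a $\Sigma$-formula $\phi$; and $\forall x\sqsubseteq t[\phi]$ for a $\Sigma$-formula $\phi$,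 variable $x$ and term $t$ not containing $x$. The theory $\mathsf{WSeq}$ has the axiom schemes: ($\mathsf{WSeq}_1$) $\overline{s}\neq\overline{t}$ for all distinct sequences $s,t$; ($\mathsf{WSeq}_2$) $\overline{(s_1,\ldots,s_n)}\circ\overline{(t_1,\ldots,t_m)}=\overline{(s_1,\ldots,s_n,t_1,\ldots,t_m)}$ for all sequences; ($\mathsf{WSeq}_3$) $\forall x[x\sqsubseteq\overline{s}\rightarrow\bigvee_{t\in I(s)}x=\overline{t}]$ for every sequence $s$, where $I(s)$ is the set of all initial segments of $s$ (including $()$ and $s$). *)

theory Defs
  imports Main
begin

text \<open>A sequence is a finite list of sequences; () is Sq [].\<close>
datatype sq = Sq "sq list"

fun sq_elems :: "sq \<Rightarrow> sq list" where "sq_elems (Sq xs) = xs"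

definition sq_snoc :: "sq \<Rightarrow> sq \<Rightarrow> sq" where
  "sq_snoc s t = Sq (sq_elems s @ [t])"

definition sq_cat :: "sq \<Rightarrow> sq \<Rightarrow> sq" where
  "sq_cat s t = Sq (sq_elems s @ sq_elems t)"

section \<open>Syntax of the language L = {e, \<turnstile>, \<circ>} (with equality)\<close>

datatype trm = TVar nat | TE | TCons trm trm | TCat trm trm

datatype fm = FEq trm trm | FNeg fm | FImp fm fm | FAll nat fm

definition FConj :: "fm \<Rightarrow> fm \<Rightarrow> fm" where "FConj a b = FNeg (FImp a (FNeg b))"
definition FDisj :: "fm \<Rightarrow> fm \<Rightarrow> fm" where "FDisj a b = FImp (FNeg a) b"
definition FEx :: "nat \<Rightarrow> fm \<Rightarrow> fm" where "FEx x a = FNeg (FAll x (FNeg a))"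

fun tvars :: "trm \<Rightarrow> nat set" where
  "tvars (TVar x) = {x}"
| "tvars TE = {}"
| "tvars (TCons s t) = tvars s \<union> tvars t"
| "tvars (TCat s t) = tvars s \<union> tvars t"

fun fv :: "fm \<Rightarrow> nat set" where
  "fv (FEq s t) = tvars s \<union> tvars t"
| "fv (FNeg a) = fv a"
| "fv (FImp a b) = fv a \<union> fv b"
| "fv (FAll x a) = fv a - {x}"

definition sentence :: "fm \<Rightarrow> bool" where "sentence a \<longleftrightarrow> fv a = {}"

text \<open>t1 \<sqsubseteq> t2 abbreviates \<exists>y[t1 \<circ> y = t2], y a variable not occurring in t1, t2.\<close>
definition fresh2 :: "trm \<Rightarrow> trm \<Rightarrow> nat" where
  "fresh2 s t = Suc (Max (insert 0 (tvars s \<union> tvars t)))"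

definition FSub :: "trm \<Rightarrow> trm \<Rightarrow> fm" where
  "FSub s t = FEx (fresh2 s t) (FEq (TCat s (TVar (fresh2 s t))) t)"

definition FBAll :: "nat \<Rightarrow> trm \<Rightarrow> fm \<Rightarrow> fm" where
  "FBAll x t a = FAll x (FImp (FSub (TVar x) t) a)"

fun FBigDisj :: "fm list \<Rightarrow> fm" where
  "FBigDisj [] = FNeg (FEq TE TE)"
| "FBigDisj [a] = a"
| "FBigDisj (a # as) = FDisj a (FBigDisj as)"

fun teval :: "(nat \<Rightarrow> sq) \<Rightarrow> trm \<Rightarrow> sq" where
  "teval e (TVar x) = e x"
| "teval e TE = Sq []"
| "teval e (TCons s t) = sq_snoc (teval e s) (teval e t)"
| "teval e (TCat s t) = sq_cat (teval e s) (teval e t)"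

fun holds :: "(nat \<Rightarrow> sq) \<Rightarrow> fm \<Rightarrow> bool" where
  "holds e (FEq s t) \<longleftrightarrow> teval e s = teval e t"
| "holds e (FNeg a) \<longleftrightarrow> \<not> holds e a"
| "holds e (FImp a b) \<longleftrightarrow> (holds e a \<longrightarrow> holds e b)"
| "holds e (FAll x a) \<longleftrightarrow> (\<forall>v. holds (e(x := v)) a)"

text \<open>S \<Turnstile> \<phi> (for a sentence, independent of the assignment).\<close>
definition true_in_S :: "fm \<Rightarrow> bool" where
  "true_in_S a \<longleftrightarrow> (\<forall>e. holds e a)"

inductive Sigma :: "fm \<Rightarrow> bool" where
  atom: "Sigma (FEq s t)"
| neg_atom: "Sigma (FNeg (FEq s t))"
| sub: "Sigma (FSub s t)"
| neg_sub: "Sigma (FNeg (FSub s t))"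
| conj: "Sigma a \<Longrightarrow> Sigma b \<Longrightarrow> Sigma (FConj a b)"
| disj: "Sigma a \<Longrightarrow> Sigma b \<Longrightarrow> Sigma (FDisj a b)"
| ex: "Sigma a \<Longrightarrow> Sigma (FEx x a)"
| ball: "Sigma a \<Longrightarrow> x \<notin> tvars t \<Longrightarrow> Sigma (FBAll x t a)"

fun numeral_sq :: "sq \<Rightarrow> trm" where
  "numeral_sq (Sq xs) = foldl (\<lambda>acc s. TCons acc (numeral_sq s)) TE xs"

definition initial_segments :: "sq \<Rightarrow> sq list" where
  "initial_segments s = map (\<lambda>k. Sq (take k (sq_elems s))) [0..<Suc (length (sq_elems s))]"

inductive_set WSeq :: "fm set" where
  wseq1: "s \<noteq> t \<Longrightarrow> FNeg (FEq (numeral_sq s) (numeral_sq t)) \<in> WSeq"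
| wseq2: "FEq (TCat (numeral_sq (Sq xs)) (numeral_sq (Sq ys))) (numeral_sq (Sq (xs @ ys))) \<in> WSeq"
| wseq3: "FAll x (FImp (FSub (TVar x) (numeral_sq s))
            (FBigDisj (map (\<lambda>u. FEq (TVar x) (numeral_sq u)) (initial_segments s)))) \<in> WSeq"

fun tsubst :: "trm \<Rightarrow> nat \<Rightarrow> trm \<Rightarrow> trm" where
  "tsubst (TVar y) x u = (if y = x then u else TVar y)"
| "tsubst TE x u = TE"
| "tsubst (TCons s t) x u = TCons (tsubst s x u) (tsubst t x u)"
| "tsubst (TCat s t) x u = TCat (tsubst s x u) (tsubst t x u)"

fun fsubst :: "fm \<Rightarrow> nat \<Rightarrow> trm \<Rightarrow> fm" where
  "fsubst (FEq s t) x u = FEq (tsubst s x u) (tsubst t x u)"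
| "fsubst (FNeg a) x u = FNeg (fsubst a x u)"
| "fsubst (FImp a b) x u = FImp (fsubst a x u) (fsubst b x u)"
| "fsubst (FAll y a) x u = (if y = x then FAll y a else FAll y (fsubst a x u))"

fun substitutable :: "trm \<Rightarrow> nat \<Rightarrow> fm \<Rightarrow> bool" where
  "substitutable u x (FEq s t) = True"
| "substitutable u x (FNeg a) = substitutable u x a"
| "substitutable u x (FImp a b) = (substitutable u x a \<and> substitutable u x b)"
| "substitutable u x (FAll y a) =
     (x \<notin> fv (FAll y a) \<or> (y \<notin> tvars u \<and> substitutable u x a))"

fun pval :: "(fm \<Rightarrow> bool) \<Rightarrow> fm \<Rightarrow> bool" where
  "pval v (FEq s t) = v (FEq s t)"
| "pval v (FNeg a) = (\<not> pval v a)"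
| "pval v (FImp a b) = (pval v a \<longrightarrow> pval v b)"
| "pval v (FAll x a) = v (FAll x a)"

definition tautology :: "fm \<Rightarrow> bool" where
  "tautology a \<longleftrightarrow> (\<forall>v. pval v a)"

inductive trepl :: "nat \<Rightarrow> nat \<Rightarrow> trm \<Rightarrow> trm \<Rightarrow> bool" where
  refl: "trepl x y t t"
| var: "trepl x y (TVar x) (TVar y)"
| cons: "trepl x y s s' \<Longrightarrow> trepl x y t t' \<Longrightarrow> trepl x y (TCons s t) (TCons s' t')"
| cat: "trepl x y s s' \<Longrightarrow> trepl x y t t' \<Longrightarrow> trepl x y (TCat s t) (TCat s' t')"

inductive_set base_axioms :: "fm set" where
  taut: "tautology a \<Longrightarrow> a \<in> base_axioms"
| inst: "substitutable u x a \<Longrightarrow> FImp (FAll x a) (fsubst a x u) \<in> base_axioms"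
| distr: "FImp (FAll x (FImp a b)) (FImp (FAll x a) (FAll x b)) \<in> base_axioms"
| vacuous: "x \<notin> fv a \<Longrightarrow> FImp a (FAll x a) \<in> base_axioms"
| eq_refl: "FEq (TVar x) (TVar x) \<in> base_axioms"
| eq_subst: "trepl x y s s' \<Longrightarrow> trepl x y t t' \<Longrightarrow>
     FImp (FEq (TVar x) (TVar y)) (FImp (FEq s t) (FEq s' t')) \<in> base_axioms"

inductive_set logical_axioms :: "fm set" where
  base: "a \<in> base_axioms \<Longrightarrow> a \<in> logical_axioms"
| gen: "a \<in> logical_axioms \<Longrightarrow> FAll x a \<in> logical_axioms"

inductive proves :: "fm set \<Rightarrow> fm \<Rightarrow> bool" where
  hyp: "a \<in> \<Gamma> \<Longrightarrow> proves \<Gamma> a"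
| ax: "a \<in> logical_axioms \<Longrightarrow> proves \<Gamma> a"
| mp: "proves \<Gamma> (FImp a b) \<Longrightarrow> proves \<Gamma> a \<Longrightarrow> proves \<Gamma> b"

end

theory Submission
  imports Defs
begin

text \<open>Given an assignment e under which a \<Sigma>-formula holds in S, substitute the sequeral of e z
  for every free variable z; by induction on \<Sigma>-formulas the resulting closed formula is
  provable in WSeq. A closed term is provably equal to the sequeral of its value by WSeq2, so
  closed (in)equations follow from WSeq1; existentials are witnessed by sequerals; and by WSeq3
  a bounded universal quantifier over a closed bound reduces to the finitely many initial
  segments of its value, each of which is covered by the induction hypothesis. For a
  sentence the substitution does nothing.\<close>

lemma finite_tvars [simp]: "finite (tvars t)"
  by (induction t) auto

lemma ex_var_notin: "finite (S :: nat set) \<Longrightarrow> \<exists>y. y \<notin> S"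
  using ex_new_if_finite[OF infinite_UNIV_nat] by auto

lemma fresh2_notin: "fresh2 s t \<notin> tvars s" "fresh2 s t \<notin> tvars t"
proof -
  have "x < fresh2 s t" if "x \<in> tvars s \<union> tvars t" for x
    using that by (simp add: fresh2_def le_imp_less_Suc)
  then show "fresh2 s t \<notin> tvars s" "fresh2 s t \<notin> tvars t" by auto
qed

lemma tsubst_nofree: "x \<notin> tvars t \<Longrightarrow> tsubst t x u = t"
  by (induction t) auto

lemma tvars_tsubst: "tvars (tsubst t x u) \<subseteq> (tvars t - {x}) \<union> tvars u"
  by (induction t) auto

lemma tsubst_TVar_notin: "y \<noteq> x \<Longrightarrow> x \<notin> tvars (tsubst s x (TVar y))"
  by (induction s) auto

lemma tsubst_tsubst_TVar: "y \<notin> tvars s \<Longrightarrow> tsubst (tsubst s x (TVar y)) y b = tsubst s x b"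
  by (induction s) auto

lemma tsubst_self [simp]: "tsubst t x (TVar x) = t"
  by (induction t) auto

lemma fsubst_self [simp]: "fsubst a x (TVar x) = a"
  by (induction a) auto

lemma substitutable_self: "substitutable (TVar x) x a"
  by (induction a) auto

lemma substitutable_closed: "tvars u = {} \<Longrightarrow> substitutable u x a"
  by (induction a) auto

lemma trepl_tsubst: "trepl x y s (tsubst s x (TVar y))"
  by (induction s) (auto intro: trepl.intros)

lemma fv_FSub: "fv (FSub s t) = tvars s \<union> tvars t"
  using fresh2_notin[of s t] by (auto simp: FSub_def FEx_def)

lemma fv_FBigDisj: "fv (FBigDisj as) \<subseteq> \<Union> (fv ` set as)"
  by (induction as rule: FBigDisj.induct) (auto simp: FDisj_def)

lemma substitutable_FBigDisj:
  "\<forall>a\<in>set as. substitutable u x a \<Longrightarrow> substitutable u x (FBigDisj as)"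
  by (induction as rule: FBigDisj.induct) (auto simp: FDisj_def)

lemma fsubst_FBigDisj: "fsubst (FBigDisj as) x u = FBigDisj (map (\<lambda>a. fsubst a x u) as)"
  by (induction as rule: FBigDisj.induct) (auto simp: FDisj_def)

section \<open>Derived rules of the calculus\<close>

lemma pval_foldr_FImp: "pval v (foldr FImp as b) \<longleftrightarrow> ((\<forall>a\<in>set as. pval v a) \<longrightarrow> pval v b)"
  by (induction as) auto

lemma proves_foldr_FImp: "proves \<Gamma> (foldr FImp as b) \<Longrightarrow> \<forall>a\<in>set as. proves \<Gamma> a \<Longrightarrow> proves \<Gamma> b"
  by (induction as) (auto intro: proves.mp)

lemma taut_consequence:
  assumes "\<And>v. \<forall>a\<in>set as. pval v a \<Longrightarrow> pval v b" and "\<forall>a\<in>set as. proves \<Gamma> a"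
  shows "proves \<Gamma> b"
proof -
  have "tautology (foldr FImp as b)"
    using assms(1) by (simp add: tautology_def pval_foldr_FImp)
  then have "proves \<Gamma> (foldr FImp as b)"
    by (intro proves.ax logical_axioms.base base_axioms.taut)
  then show ?thesis using assms(2) by (rule proves_foldr_FImp)
qed

lemma taut_consequence0: "(\<And>v. pval v b) \<Longrightarrow> proves \<Gamma> b"
  by (rule taut_consequence[of "[]"]) auto

lemma taut_consequence1:
  "(\<And>v. pval v a\<^sub>1 \<Longrightarrow> pval v b) \<Longrightarrow> proves \<Gamma> a\<^sub>1 \<Longrightarrow> proves \<Gamma> b"
  by (rule taut_consequence[of "[a\<^sub>1]"]) auto

lemma taut_consequence2:
  "(\<And>v. pval v a\<^sub>1 \<Longrightarrow> pval v a\<^sub>2 \<Longrightarrow> pval v b) \<Longrightarrow>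
    proves \<Gamma> a\<^sub>1 \<Longrightarrow> proves \<Gamma> a\<^sub>2 \<Longrightarrow> proves \<Gamma> b"
  by (rule taut_consequence[of "[a\<^sub>1, a\<^sub>2]"]) auto

lemma taut_consequence3:
  "(\<And>v. pval v a\<^sub>1 \<Longrightarrow> pval v a\<^sub>2 \<Longrightarrow> pval v a\<^sub>3 \<Longrightarrow> pval v b) \<Longrightarrow>
    proves \<Gamma> a\<^sub>1 \<Longrightarrow> proves \<Gamma> a\<^sub>2 \<Longrightarrow> proves \<Gamma> a\<^sub>3 \<Longrightarrow> proves \<Gamma> b"
  by (rule taut_consequence[of "[a\<^sub>1, a\<^sub>2, a\<^sub>3]"]) auto

lemma taut_consequence4:
  "(\<And>v. pval v a\<^sub>1 \<Longrightarrow> pval v a\<^sub>2 \<Longrightarrow> pval v a\<^sub>3 \<Longrightarrow> pval v a\<^sub>4 \<Longrightarrow> pval v b) \<Longrightarrow>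
    proves \<Gamma> a\<^sub>1 \<Longrightarrow> proves \<Gamma> a\<^sub>2 \<Longrightarrow> proves \<Gamma> a\<^sub>3 \<Longrightarrow> proves \<Gamma> a\<^sub>4 \<Longrightarrow> proves \<Gamma> b"
  by (rule taut_consequence[of "[a\<^sub>1, a\<^sub>2, a\<^sub>3, a\<^sub>4]"]) auto

lemma proves_inst_imp: "substitutable u x a \<Longrightarrow> proves \<Gamma> (FImp (FAll x a) (fsubst a x u))"
  by (intro proves.ax logical_axioms.base base_axioms.inst)

lemma proves_inst: "proves \<Gamma> (FAll x a) \<Longrightarrow> substitutable u x a \<Longrightarrow> proves \<Gamma> (fsubst a x u)"
  using proves_inst_imp proves.mp by blast

lemma proves_FEx_intro_imp:
  assumes "substitutable u x a"
  shows "proves \<Gamma> (FImp (fsubst a x u) (FEx x a))"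
proof -
  have "proves \<Gamma> (FImp (FAll x (FNeg a)) (fsubst (FNeg a) x u))"
    using assms by (intro proves_inst_imp) simp
  then show ?thesis unfolding FEx_def by (rule taut_consequence1[rotated]) auto
qed

lemma proves_FEx_intro: "proves \<Gamma> (fsubst a x u) \<Longrightarrow> substitutable u x a \<Longrightarrow> proves \<Gamma> (FEx x a)"
  using proves_FEx_intro_imp proves.mp by blast

text \<open>Generalization is sound only over hypotheses without free variables.\<close>
lemma proves_gen:
  assumes "proves \<Gamma> a" and "\<forall>b\<in>\<Gamma>. fv b = {}"
  shows "proves \<Gamma> (FAll x a)"
  using assms
proof (induction rule: proves.induct)
  case (hyp a \<Gamma>)
  then have "proves \<Gamma> (FImp a (FAll x a))"
    by (intro proves.ax logical_axioms.base base_axioms.vacuous) auto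
  then show ?case using hyp by (auto intro: proves.mp proves.hyp)
next
  case (ax a \<Gamma>)
  then show ?case by (intro proves.ax logical_axioms.gen)
next
  case (mp \<Gamma> a b)
  have "proves \<Gamma> (FImp (FAll x (FImp a b)) (FImp (FAll x a) (FAll x b)))"
    by (intro proves.ax logical_axioms.base base_axioms.distr)
  then show ?case using mp by (meson proves.mp)
qed

lemma proves_imp_FAll:
  assumes "proves \<Gamma> (FImp a b)" and "x \<notin> fv a" and "\<forall>c\<in>\<Gamma>. fv c = {}"
  shows "proves \<Gamma> (FImp a (FAll x b))"
proof -
  have "proves \<Gamma> (FAll x (FImp a b))" using assms(1,3) by (rule proves_gen)
  moreover have "proves \<Gamma> (FImp (FAll x (FImp a b)) (FImp (FAll x a) (FAll x b)))"
    by (intro proves.ax logical_axioms.base base_axioms.distr)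
  moreover have "proves \<Gamma> (FImp a (FAll x a))"
    using assms(2) by (intro proves.ax logical_axioms.base base_axioms.vacuous)
  ultimately show ?thesis by (rule taut_consequence3[rotated]) auto
qed

lemma proves_FEx_elim:
  assumes "proves \<Gamma> (FImp a b)" and "x \<notin> fv b" and "\<forall>c\<in>\<Gamma>. fv c = {}"
  shows "proves \<Gamma> (FImp (FEx x a) b)"
proof -
  have "proves \<Gamma> (FImp (FNeg b) (FNeg a))" by (rule taut_consequence1[OF _ assms(1)]) auto
  then have "proves \<Gamma> (FImp (FNeg b) (FAll x (FNeg a)))"
    using assms(2,3) by (intro proves_imp_FAll) auto
  then show ?thesis unfolding FEx_def by (rule taut_consequence1[rotated]) auto
qed

section \<open>Equality\<close>

text \<open>The equality axioms only replace variables by variables; instantiating the two variables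
  of such an axiom, with y chosen fresh, yields replacement of arbitrary terms.\<close>
lemma proves_eq_cong:
  "proves \<Gamma> (FImp (FEq a b)
     (FImp (FEq (tsubst s x a) (tsubst r x a)) (FEq (tsubst s x b) (tsubst r x b))))"
proof -
  obtain y where y: "y \<notin> {x} \<union> tvars a \<union> tvars b \<union> tvars s \<union> tvars r"
    using ex_var_notin[of "{x} \<union> tvars a \<union> tvars b \<union> tvars s \<union> tvars r"] by auto
  define \<Phi> where "\<Phi> = FImp (FEq (TVar x) (TVar y))
    (FImp (FEq s r) (FEq (tsubst s x (TVar y)) (tsubst r x (TVar y))))"
  have "\<Phi> \<in> base_axioms" unfolding \<Phi>_def by (intro base_axioms.eq_subst trepl_tsubst)
  then have "proves \<Gamma> (FAll x (FAll y \<Phi>))"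
    by (intro proves.ax logical_axioms.gen logical_axioms.base)
  then have "proves \<Gamma> (fsubst (FAll y \<Phi>) x a)"
    by (rule proves_inst) (use y in \<open>simp add: \<Phi>_def\<close>)
  then have "proves \<Gamma> (FAll y (fsubst \<Phi> x a))" using y by simp
  then have "proves \<Gamma> (fsubst (fsubst \<Phi> x a) y b)" by (rule proves_inst) (simp add: \<Phi>_def)
  moreover
  have "tsubst (tsubst s x (TVar y)) x a = tsubst s x (TVar y)"
    "tsubst (tsubst r x (TVar y)) x a = tsubst r x (TVar y)"
    using y by (auto intro!: tsubst_nofree tsubst_TVar_notin)
  moreover have "tsubst (tsubst s x (TVar y)) y b = tsubst s x b"
    "tsubst (tsubst r x (TVar y)) y b = tsubst r x b"
    using y by (auto intro!: tsubst_tsubst_TVar)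
  moreover have "tsubst (tsubst s x a) y b = tsubst s x a" "tsubst (tsubst r x a) y b = tsubst r x a"
    using y tvars_tsubst[of s x a] tvars_tsubst[of r x a] by (auto intro!: tsubst_nofree)
  moreover have "tsubst a y b = a" using y by (auto intro!: tsubst_nofree)
  ultimately show ?thesis using y by (simp add: \<Phi>_def)
qed

lemma proves_eq_refl: "proves \<Gamma> (FEq a a)"
proof -
  have "proves \<Gamma> (FAll 0 (FEq (TVar 0) (TVar 0)))"
    by (intro proves.ax logical_axioms.gen logical_axioms.base base_axioms.eq_refl)
  from proves_inst[OF this, of a] show ?thesis by simp
qed

lemma proves_eq_sym_imp: "proves \<Gamma> (FImp (FEq a b) (FEq b a))"
proof -
  obtain x where x: "x \<notin> tvars a \<union> tvars b" using ex_var_notin[of "tvars a \<union> tvars b"] by auto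
  have "proves \<Gamma> (FImp (FEq a b)
    (FImp (FEq (tsubst (TVar x) x a) (tsubst a x a)) (FEq (tsubst (TVar x) x b) (tsubst a x b))))"
    by (rule proves_eq_cong)
  then have cong: "proves \<Gamma> (FImp (FEq a b) (FImp (FEq a a) (FEq b a)))"
    using x by (simp add: tsubst_nofree)
  show ?thesis by (rule taut_consequence2[OF _ cong proves_eq_refl[of _ a]]) auto
qed

lemma proves_eq_trans_imp: "proves \<Gamma> (FImp (FEq a b) (FImp (FEq b c) (FEq a c)))"
proof -
  obtain x where x: "x \<notin> tvars a \<union> tvars b \<union> tvars c"
    using ex_var_notin[of "tvars a \<union> tvars b \<union> tvars c"] by auto
  have "proves \<Gamma> (FImp (FEq b a)
    (FImp (FEq (tsubst (TVar x) x b) (tsubst c x b)) (FEq (tsubst (TVar x) x a) (tsubst c x a))))"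
    by (rule proves_eq_cong)
  then have cong: "proves \<Gamma> (FImp (FEq b a) (FImp (FEq b c) (FEq a c)))"
    using x by (simp add: tsubst_nofree)
  show ?thesis by (rule taut_consequence2[OF _ cong proves_eq_sym_imp[of _ a b]]) auto
qed

lemma proves_eq_sym: "proves \<Gamma> (FEq a b) \<Longrightarrow> proves \<Gamma> (FEq b a)"
  using proves_eq_sym_imp proves.mp by blast

lemma proves_eq_trans: "proves \<Gamma> (FEq a b) \<Longrightarrow> proves \<Gamma> (FEq b c) \<Longrightarrow> proves \<Gamma> (FEq a c)"
  using proves_eq_trans_imp proves.mp by blast

lemma proves_eq_tsubst:
  assumes "proves \<Gamma> (FEq a b)" and "x \<notin> tvars a"
  shows "proves \<Gamma> (FEq (tsubst s x a) (tsubst s x b))"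
proof -
  have "x \<notin> tvars (tsubst s x a)" using assms(2) tvars_tsubst[of s x a] by auto
  then have "proves \<Gamma> (FImp (FEq a b) (FImp (FEq (tsubst s x a) (tsubst s x a))
      (FEq (tsubst s x a) (tsubst s x b))))"
    using proves_eq_cong[of \<Gamma> a b "tsubst s x a" x s] by (simp add: tsubst_nofree)
  then show ?thesis using assms(1) proves_eq_refl proves.mp by blast
qed

lemma proves_eq_TCons:
  assumes "proves \<Gamma> (FEq a a')" and "proves \<Gamma> (FEq b b')"
  shows "proves \<Gamma> (FEq (TCons a b) (TCons a' b'))"
proof -
  obtain x where x: "x \<notin> tvars a \<union> tvars b \<union> tvars a'"
    using ex_var_notin[of "tvars a \<union> tvars b \<union> tvars a'"] by auto
  have "proves \<Gamma> (FEq (TCons a b) (TCons a' b))"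
    using proves_eq_tsubst[OF assms(1), of x "TCons (TVar x) b"] x by (simp add: tsubst_nofree)
  moreover have "proves \<Gamma> (FEq (TCons a' b) (TCons a' b'))"
    using proves_eq_tsubst[OF assms(2), of x "TCons a' (TVar x)"] x by (simp add: tsubst_nofree)
  ultimately show ?thesis by (rule proves_eq_trans)
qed

lemma proves_eq_TCat:
  assumes "proves \<Gamma> (FEq a a')" and "proves \<Gamma> (FEq b b')"
  shows "proves \<Gamma> (FEq (TCat a b) (TCat a' b'))"
proof -
  obtain x where x: "x \<notin> tvars a \<union> tvars b \<union> tvars a'"
    using ex_var_notin[of "tvars a \<union> tvars b \<union> tvars a'"] by auto
  have "proves \<Gamma> (FEq (TCat a b) (TCat a' b))"
    using proves_eq_tsubst[OF assms(1), of x "TCat (TVar x) b"] x by (simp add: tsubst_nofree)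
  moreover have "proves \<Gamma> (FEq (TCat a' b) (TCat a' b'))"
    using proves_eq_tsubst[OF assms(2), of x "TCat a' (TVar x)"] x by (simp add: tsubst_nofree)
  ultimately show ?thesis by (rule proves_eq_trans)
qed

lemma proves_FBigDisj_neg: "\<forall>a\<in>set as. proves \<Gamma> (FNeg a) \<Longrightarrow> proves \<Gamma> (FNeg (FBigDisj as))"
proof (induction as rule: FBigDisj.induct)
  case 1
  show ?case by (rule taut_consequence1[OF _ proves_eq_refl[of _ TE]]) simp
next
  case (3 a b as)
  then have "proves \<Gamma> (FNeg a)" and "proves \<Gamma> (FNeg (FBigDisj (b # as)))" by auto
  then show ?case unfolding FBigDisj.simps FDisj_def by (rule taut_consequence2[rotated]) auto
qed simp

lemma proves_FBigDisj_elim: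
  "\<forall>a\<in>set as. proves \<Gamma> (FImp a c) \<Longrightarrow> proves \<Gamma> (FImp (FBigDisj as) c)"
proof (induction as rule: FBigDisj.induct)
  case 1
  show ?case by (rule taut_consequence1[OF _ proves_eq_refl[of _ TE]]) simp
next
  case (3 a b as)
  then have "proves \<Gamma> (FImp a c)" and "proves \<Gamma> (FImp (FBigDisj (b # as)) c)" by auto
  then show ?case unfolding FBigDisj.simps FDisj_def by (rule taut_consequence2[rotated]) auto
qed simp

lemma proves_eq_replace:
  assumes "tvars t = {}" and "\<forall>c\<in>\<Gamma>. fv c = {}"
  shows "proves \<Gamma> (FImp (FEq (TVar x) t) (FImp a (fsubst a x t))) \<and>
    proves \<Gamma> (FImp (FEq (TVar x) t) (FImp (fsubst a x t) a))"
proof (induction a)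
  case (FEq s r)
  have "proves \<Gamma> (FImp (FEq (TVar x) t) (FImp (FEq s r) (FEq (tsubst s x t) (tsubst r x t))))"
    using proves_eq_cong[of \<Gamma> "TVar x" t s x r] by simp
  moreover
  have converse: "proves \<Gamma> (FImp (FEq t (TVar x)) (FImp (FEq (tsubst s x t) (tsubst r x t)) (FEq s r)))"
    using proves_eq_cong[of \<Gamma> t "TVar x" s x r] by simp
  then have "proves \<Gamma> (FImp (FEq (TVar x) t) (FImp (FEq (tsubst s x t) (tsubst r x t)) (FEq s r)))"
    by (intro taut_consequence2[OF _ converse proves_eq_sym_imp[of _ "TVar x" t]]) auto
  ultimately show ?case by simp
next
  case (FNeg a)
  then have fwd: "proves \<Gamma> (FImp (FEq (TVar x) t) (FImp a (fsubst a x t)))"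
    and bwd: "proves \<Gamma> (FImp (FEq (TVar x) t) (FImp (fsubst a x t) a))" by auto
  have "proves \<Gamma> (FImp (FEq (TVar x) t) (FImp (FNeg (fsubst a x t)) (FNeg a)))"
    by (rule taut_consequence1[OF _ fwd]) auto
  moreover have "proves \<Gamma> (FImp (FEq (TVar x) t) (FImp (FNeg a) (FNeg (fsubst a x t))))"
    by (rule taut_consequence1[OF _ bwd]) auto
  ultimately show ?case by simp
next
  case (FImp a b)
  then have a1: "proves \<Gamma> (FImp (FEq (TVar x) t) (FImp a (fsubst a x t)))"
    and a2: "proves \<Gamma> (FImp (FEq (TVar x) t) (FImp (fsubst a x t) a))"
    and b1: "proves \<Gamma> (FImp (FEq (TVar x) t) (FImp b (fsubst b x t)))"
    and b2: "proves \<Gamma> (FImp (FEq (TVar x) t) (FImp (fsubst b x t) b))" by auto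
  have "proves \<Gamma> (FImp (FEq (TVar x) t) (FImp (FImp a b) (FImp (fsubst a x t) (fsubst b x t))))"
    by (rule taut_consequence2[OF _ a2 b1]) auto
  moreover have "proves \<Gamma> (FImp (FEq (TVar x) t) (FImp (FImp (fsubst a x t) (fsubst b x t)) (FImp a b)))"
    by (rule taut_consequence2[OF _ a1 b2]) auto
  ultimately show ?case by simp
next
  case (FAll y b)
  show ?case
  proof (cases "y = x")
    case True
    then show ?thesis by (auto intro: taut_consequence0)
  next
    case False
    let ?E = "FEq (TVar x) t" and ?b' = "fsubst b x t"
    have fv: "y \<notin> fv (FConj ?E (FAll y b))" "y \<notin> fv (FConj ?E (FAll y ?b'))"
      using False assms(1) by (auto simp: FConj_def)
    from FAll.IH have fwd: "proves \<Gamma> (FImp ?E (FImp b ?b'))"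
      and bwd: "proves \<Gamma> (FImp ?E (FImp ?b' b))" by auto
    have inst: "proves \<Gamma> (FImp (FAll y b) b)" "proves \<Gamma> (FImp (FAll y ?b') ?b')"
      using proves_inst_imp[OF substitutable_self] by simp_all
    have "proves \<Gamma> (FImp (FConj ?E (FAll y b)) ?b')"
      unfolding FConj_def by (rule taut_consequence2[OF _ fwd inst(1)]) auto
    then have "proves \<Gamma> (FImp (FConj ?E (FAll y b)) (FAll y ?b'))"
      using fv(1) assms(2) by (rule proves_imp_FAll)
    then have "proves \<Gamma> (FImp ?E (FImp (FAll y b) (FAll y ?b')))"
      unfolding FConj_def by (rule taut_consequence1[rotated]) auto
    moreover have "proves \<Gamma> (FImp (FConj ?E (FAll y ?b')) b)"
      unfolding FConj_def by (rule taut_consequence2[OF _ bwd inst(2)]) auto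
    then have "proves \<Gamma> (FImp (FConj ?E (FAll y ?b')) (FAll y b))"
      using fv(2) assms(2) by (rule proves_imp_FAll)
    then have "proves \<Gamma> (FImp ?E (FImp (FAll y ?b') (FAll y b)))"
      unfolding FConj_def by (rule taut_consequence1[rotated]) auto
    ultimately show ?thesis using False by simp
  qed
qed

section \<open>Sequerals and the axioms of WSeq\<close>

lemma Sq_sq_elems [simp]: "Sq (sq_elems s) = s"
  by (cases s) simp

definition sq_prefix :: "sq \<Rightarrow> sq \<Rightarrow> bool" where
  "sq_prefix u s \<longleftrightarrow> (\<exists>v. sq_cat u v = s)"

lemma set_initial_segments: "set (initial_segments s) = {u. sq_prefix u s}"
proof (intro set_eqI iffI)
  fix u assume "u \<in> set (initial_segments s)"
  then obtain k where "u = Sq (take k (sq_elems s))"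
    unfolding initial_segments_def set_map by blast
  then have "sq_cat u (Sq (drop k (sq_elems s))) = s" by (simp add: sq_cat_def)
  then show "u \<in> {u. sq_prefix u s}" by (auto simp: sq_prefix_def)
next
  fix u assume "u \<in> {u. sq_prefix u s}"
  then obtain w where "sq_cat u w = s" by (auto simp: sq_prefix_def)
  then have s: "sq_elems s = sq_elems u @ sq_elems w" by (auto simp: sq_cat_def)
  then have "u = Sq (take (length (sq_elems u)) (sq_elems s))" by simp
  moreover have "length (sq_elems u) \<in> set [0..<Suc (length (sq_elems s))]" using s by simp
  ultimately show "u \<in> set (initial_segments s)"
    unfolding initial_segments_def set_map by (rule image_eqI)
qed

lemma numeral_sq_Nil: "numeral_sq (Sq []) = TE"
  by simp

lemma numeral_sq_snoc: "numeral_sq (Sq (xs @ [y])) = TCons (numeral_sq (Sq xs)) (numeral_sq y)"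
  by simp

declare numeral_sq.simps [simp del]

lemma tvars_numeral_sq [simp]: "tvars (numeral_sq s) = {}"
proof (induction s rule: numeral_sq.induct)
  case (1 xs)
  have "tvars (foldl (\<lambda>acc s. TCons acc (numeral_sq s)) acc ys) = {}"
    if "tvars acc = {}" and "set ys \<subseteq> set xs" for acc ys
    using that 1 by (induction ys arbitrary: acc) auto
  then show ?case by (simp add: numeral_sq.simps)
qed

lemma tsubst_numeral_sq [simp]: "tsubst (numeral_sq s) x u = numeral_sq s"
  by (simp add: tsubst_nofree)

lemma teval_numeral_sq [simp]: "teval e (numeral_sq s) = s"
proof (induction s rule: numeral_sq.induct)
  case (1 xs)
  have "teval e (foldl (\<lambda>acc s. TCons acc (numeral_sq s)) acc ys) = Sq (sq_elems (teval e acc) @ ys)"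
    if "set ys \<subseteq> set xs" for acc ys
    using that 1 by (induction ys arbitrary: acc) (auto simp: sq_snoc_def)
  then show ?case by (simp add: numeral_sq.simps)
qed

lemma WSeq_closed: "\<forall>a\<in>WSeq. fv a = {}"
proof
  fix a assume "a \<in> WSeq"
  then show "fv a = {}"
  proof (induction rule: WSeq.induct)
    case (wseq3 x s)
    have "fv (FBigDisj (map (\<lambda>u. FEq (TVar x) (numeral_sq u)) (initial_segments s))) \<subseteq> {x}"
      using fv_FBigDisj by fastforce
    then show ?case by (auto simp: fv_FSub)
  qed auto
qed

lemma proves_eq_numeral_teval: "tvars t = {} \<Longrightarrow> proves WSeq (FEq t (numeral_sq (teval e t)))"
proof (induction t)
  case TE
  show ?case by (simp add: numeral_sq_Nil proves_eq_refl)
next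
  case (TCons s r)
  then have "proves WSeq (FEq (TCons s r) (TCons (numeral_sq (teval e s)) (numeral_sq (teval e r))))"
    by (auto intro: proves_eq_TCons)
  then show ?case by (simp add: sq_snoc_def numeral_sq_snoc)
next
  case (TCat s r)
  obtain xs ys where xy: "teval e s = Sq xs" "teval e r = Sq ys" by (meson sq.exhaust)
  have "proves WSeq (FEq (TCat s r) (TCat (numeral_sq (Sq xs)) (numeral_sq (Sq ys))))"
    using TCat xy by (auto intro: proves_eq_TCat)
  moreover have "proves WSeq (FEq (TCat (numeral_sq (Sq xs)) (numeral_sq (Sq ys))) (numeral_sq (Sq (xs @ ys))))"
    by (intro proves.hyp WSeq.wseq2)
  ultimately show ?case using xy by (simp add: sq_cat_def proves_eq_trans)
qed simp

lemma proves_eq_closed: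
  "tvars s = {} \<Longrightarrow> tvars t = {} \<Longrightarrow> teval e s = teval e t \<Longrightarrow> proves WSeq (FEq s t)"
  using proves_eq_numeral_teval[of s e] proves_eq_numeral_teval[of t e] proves_eq_sym proves_eq_trans
  by metis

lemma proves_neq_closed:
  assumes "tvars s = {}" and "tvars t = {}" and "teval e s \<noteq> teval e t"
  shows "proves WSeq (FNeg (FEq s t))"
proof -
  let ?a = "numeral_sq (teval e s)" and ?b = "numeral_sq (teval e t)"
  have numerals_neq: "proves WSeq (FNeg (FEq ?a ?b))" using assms(3) by (intro proves.hyp WSeq.wseq1)
  have s_eq: "proves WSeq (FEq ?a s)" using proves_eq_numeral_teval[OF assms(1)] by (rule proves_eq_sym)
  have t_eq: "proves WSeq (FEq t ?b)" using proves_eq_numeral_teval[OF assms(2)] .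
  have s_trans: "proves WSeq (FImp (FEq s t) (FEq ?a t))"
    by (rule taut_consequence2[OF _ s_eq proves_eq_trans_imp[of _ ?a s t]]) auto
  show ?thesis
    by (rule taut_consequence4[OF _ numerals_neq t_eq s_trans proves_eq_trans_imp[of _ ?a t ?b]]) auto
qed

lemma proves_FEx_cat_rename:
  assumes "proves \<Gamma> (FEq t t')" and "tvars t' = {}" and "y \<notin> tvars u" and "z \<notin> tvars u"
    and "\<forall>c\<in>\<Gamma>. fv c = {}"
  shows "proves \<Gamma> (FImp (FEx z (FEq (TCat u (TVar z)) t)) (FEx y (FEq (TCat u (TVar y)) t')))"
proof -
  have witness: "proves \<Gamma> (FImp (FEq (TCat u (TVar z)) t') (FEx y (FEq (TCat u (TVar y)) t')))"
    using proves_FEx_intro_imp[of "TVar z" y "FEq (TCat u (TVar y)) t'"] assms(2,3)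
    by (simp add: tsubst_nofree)
  have "proves \<Gamma> (FImp (FEq (TCat u (TVar z)) t) (FEx y (FEq (TCat u (TVar y)) t')))"
    by (rule taut_consequence3[OF _ assms(1) witness proves_eq_trans_imp[of _ _ t t']]) auto
  then show ?thesis by (rule proves_FEx_elim) (use assms in \<open>auto simp: FEx_def\<close>)
qed

text \<open>The witness variable of FSub is fixed by fresh2, so the existential at hand is first
  renamed to match the instance of WSeq3.\<close>
lemma proves_prefix_numeral_cases:
  assumes "proves WSeq (FEq t (numeral_sq b))" and "z \<notin> tvars u"
  shows "proves WSeq (FImp (FEx z (FEq (TCat u (TVar z)) t))
    (FBigDisj (map (\<lambda>w. FEq u (numeral_sq w)) (initial_segments b))))"
proof -
  obtain y where y: "y \<notin> insert 0 (tvars u)" using ex_var_notin[of "insert 0 (tvars u)"] by auto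
  define x where "x = y - 1"
  have y_def: "y = Suc x" using y by (simp add: x_def)
  have "FSub (TVar x) (numeral_sq b) = FEx y (FEq (TCat (TVar x) (TVar y)) (numeral_sq b))"
    by (simp add: FSub_def fresh2_def y_def)
  moreover have "proves WSeq (FAll x (FImp (FSub (TVar x) (numeral_sq b))
      (FBigDisj (map (\<lambda>w. FEq (TVar x) (numeral_sq w)) (initial_segments b)))))"
    by (intro proves.hyp WSeq.wseq3)
  ultimately have "proves WSeq (fsubst (FImp (FEx y (FEq (TCat (TVar x) (TVar y)) (numeral_sq b)))
      (FBigDisj (map (\<lambda>w. FEq (TVar x) (numeral_sq w)) (initial_segments b)))) x u)"
    using y by (intro proves_inst) (auto simp: FEx_def y_def intro!: substitutable_FBigDisj)
  then have "proves WSeq (FImp (FEx y (FEq (TCat u (TVar y)) (numeral_sq b)))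
      (FBigDisj (map (\<lambda>w. FEq u (numeral_sq w)) (initial_segments b))))"
    by (simp add: FEx_def fsubst_FBigDisj comp_def y_def)
  moreover have "proves WSeq (FImp (FEx z (FEq (TCat u (TVar z)) t))
      (FEx y (FEq (TCat u (TVar y)) (numeral_sq b))))"
    using assms y WSeq_closed by (intro proves_FEx_cat_rename) auto
  ultimately show ?thesis by (rule taut_consequence2[rotated]) auto
qed

lemma proves_prefix_closed:
  assumes "tvars s = {}" and "tvars t = {}" and "sq_prefix (teval e s) (teval e t)"
  shows "proves WSeq (FEx z (FEq (TCat s (TVar z)) t))"
proof -
  obtain v where "sq_cat (teval e s) v = teval e t" using assms(3) by (auto simp: sq_prefix_def)
  then have "proves WSeq (FEq (TCat s (numeral_sq v)) t)"
    using assms(1,2) by (intro proves_eq_closed[where e = e]) auto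
  then have "proves WSeq (fsubst (FEq (TCat s (TVar z)) t) z (numeral_sq v))"
    using assms(1,2) by (simp add: tsubst_nofree)
  then show ?thesis by (rule proves_FEx_intro) (simp add: substitutable_closed)
qed

lemma proves_not_prefix_closed:
  assumes "tvars s = {}" and "tvars t = {}" and "\<not> sq_prefix (teval e s) (teval e t)"
  shows "proves WSeq (FNeg (FEx z (FEq (TCat s (TVar z)) t)))"
proof -
  let ?cases = "map (\<lambda>w. FEq s (numeral_sq w)) (initial_segments (teval e t))"
  have "proves WSeq (FImp (FEx z (FEq (TCat s (TVar z)) t)) (FBigDisj ?cases))"
    using assms(1,2) by (intro proves_prefix_numeral_cases proves_eq_numeral_teval) auto
  moreover have "proves WSeq (FNeg (FBigDisj ?cases))"
    using assms by (intro proves_FBigDisj_neg) (auto simp: set_initial_segments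
      intro!: proves_neq_closed[where e = e])
  ultimately show ?thesis by (rule taut_consequence2[rotated]) auto
qed

lemma proves_bounded_FAll:
  assumes "tvars t = {}" and "z \<noteq> x"
    and "\<And>w. sq_prefix w (teval e t) \<Longrightarrow> proves WSeq (fsubst a x (numeral_sq w))"
  shows "proves WSeq (FAll x (FImp (FEx z (FEq (TCat (TVar x) (TVar z)) t)) a))"
proof -
  let ?cases = "map (\<lambda>w. FEq (TVar x) (numeral_sq w)) (initial_segments (teval e t))"
  have "proves WSeq (FImp (FEx z (FEq (TCat (TVar x) (TVar z)) t)) (FBigDisj ?cases))"
    using assms(1,2) by (intro proves_prefix_numeral_cases proves_eq_numeral_teval) auto
  moreover have "proves WSeq (FImp (FBigDisj ?cases) a)"
  proof (intro proves_FBigDisj_elim ballI)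
    fix c assume "c \<in> set ?cases"
    then obtain w where w: "sq_prefix w (teval e t)" and c: "c = FEq (TVar x) (numeral_sq w)"
      by (auto simp: set_initial_segments)
    have "proves WSeq (FImp c (FImp (fsubst a x (numeral_sq w)) a))"
      using proves_eq_replace[of "numeral_sq w" WSeq x a] WSeq_closed c by auto
    then show "proves WSeq (FImp c a)" using assms(3)[OF w] by (rule taut_consequence2[rotated]) auto
  qed
  ultimately have "proves WSeq (FImp (FEx z (FEq (TCat (TVar x) (TVar z)) t)) a)"
    by (rule taut_consequence2[rotated]) auto
  then show ?thesis using WSeq_closed by (rule proves_gen)
qed

section \<open>Closing a formula by sequerals\<close>

text \<open>Capture is not avoided; this is harmless because the substituted terms below are
  closed.\<close>
fun tsubsts :: "(nat \<Rightarrow> trm) \<Rightarrow> trm \<Rightarrow> trm" where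
  "tsubsts \<sigma> (TVar x) = \<sigma> x"
| "tsubsts \<sigma> TE = TE"
| "tsubsts \<sigma> (TCons s t) = TCons (tsubsts \<sigma> s) (tsubsts \<sigma> t)"
| "tsubsts \<sigma> (TCat s t) = TCat (tsubsts \<sigma> s) (tsubsts \<sigma> t)"

fun fsubsts :: "(nat \<Rightarrow> trm) \<Rightarrow> fm \<Rightarrow> fm" where
  "fsubsts \<sigma> (FEq s t) = FEq (tsubsts \<sigma> s) (tsubsts \<sigma> t)"
| "fsubsts \<sigma> (FNeg a) = FNeg (fsubsts \<sigma> a)"
| "fsubsts \<sigma> (FImp a b) = FImp (fsubsts \<sigma> a) (fsubsts \<sigma> b)"
| "fsubsts \<sigma> (FAll y a) = FAll y (fsubsts (\<sigma>(y := TVar y)) a)"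

lemma tsubsts_cong: "(\<And>z. z \<in> tvars t \<Longrightarrow> \<sigma> z = \<sigma>' z) \<Longrightarrow> tsubsts \<sigma> t = tsubsts \<sigma>' t"
  by (induction t) auto

lemma fsubsts_id: "(\<And>z. z \<in> fv a \<Longrightarrow> \<sigma> z = TVar z) \<Longrightarrow> fsubsts \<sigma> a = a"
proof (induction a arbitrary: \<sigma>)
  case (FEq s t)
  have "tsubsts \<sigma> r = tsubsts TVar r" if "tvars r \<subseteq> fv (FEq s t)" for r
    using FEq that by (intro tsubsts_cong) auto
  moreover have "tsubsts TVar r = r" for r by (induction r) auto
  ultimately show ?case by simp
qed auto

lemma tvars_tsubsts_numeral [simp]: "tvars (tsubsts (\<lambda>z. numeral_sq (e z)) t) = {}"
  by (induction t) auto

lemma teval_tsubsts_numeral [simp]: "teval e' (tsubsts (\<lambda>z. numeral_sq (e z)) t) = teval e t"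
  by (induction t) auto

lemma tsubst_tsubsts:
  "(\<And>z. z \<noteq> x \<Longrightarrow> x \<notin> tvars (\<sigma> z)) \<Longrightarrow>
    tsubst (tsubsts (\<sigma>(x := TVar x)) s) x u = tsubsts (\<sigma>(x := u)) s"
  by (induction s) (auto simp: tsubst_nofree)

lemma fsubst_fsubsts:
  "(\<And>z. z \<noteq> x \<Longrightarrow> x \<notin> tvars (\<sigma> z)) \<Longrightarrow>
    fsubst (fsubsts (\<sigma>(x := TVar x)) a) x u = fsubsts (\<sigma>(x := u)) a"
proof (induction a arbitrary: \<sigma>)
  case (FEq s t)
  have "tsubst (tsubsts (\<sigma>(x := TVar x)) r) x u = tsubsts (\<sigma>(x := u)) r" for r
    using FEq.prems by (rule tsubst_tsubsts)
  then show ?case by (simp only: fsubsts.simps fsubst.simps)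
next
  case (FAll y b)
  show ?case
  proof (cases "y = x")
    case True
    then show ?thesis by (simp only: fsubsts.simps fsubst.simps fun_upd_upd) simp
  next
    case False
    have "fsubst (fsubsts (\<sigma>(x := TVar x)) (FAll y b)) x u
        = FAll y (fsubst (fsubsts ((\<sigma>(y := TVar y))(x := TVar x)) b) x u)"
      using False by (simp add: fun_upd_twist)
    also have "\<dots> = FAll y (fsubsts ((\<sigma>(y := TVar y))(x := u)) b)"
      using FAll.prems False by (subst FAll.IH) auto
    also have "\<dots> = fsubsts (\<sigma>(x := u)) (FAll y b)" using False by (simp add: fun_upd_twist)
    finally show ?thesis .
  qed
qed auto

lemma fsubst_fsubsts_numeral:
  "fsubst (fsubsts ((\<lambda>z. numeral_sq (e z))(x := TVar x)) a) x (numeral_sq v)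
    = fsubsts ((\<lambda>z. numeral_sq ((e(x := v)) z))) a"
proof -
  have "(\<lambda>z. numeral_sq ((e(x := v)) z)) = (\<lambda>z. numeral_sq (e z))(x := numeral_sq v)"
    by auto
  then show ?thesis by (subst fsubst_fsubsts) auto
qed

lemma fsubsts_FEx: "fsubsts \<sigma> (FEx x a) = FEx x (fsubsts (\<sigma>(x := TVar x)) a)"
  by (simp add: FEx_def)

lemma fsubsts_FSub:
  "fsubsts \<sigma> (FSub s t)
    = FEx (fresh2 s t) (FEq (TCat (tsubsts \<sigma> s) (TVar (fresh2 s t))) (tsubsts \<sigma> t))"
proof -
  have "tsubsts (\<sigma>(fresh2 s t := TVar (fresh2 s t))) r = tsubsts \<sigma> r" if "r \<in> {s, t}" for r
    using fresh2_notin[of s t] that by (auto intro!: tsubsts_cong)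
  then show ?thesis by (simp add: FSub_def FEx_def)
qed

lemma fsubsts_FBAll:
  assumes "x \<notin> tvars t"
  shows "fsubsts \<sigma> (FBAll x t a) = FAll x (FImp
    (FEx (fresh2 (TVar x) t) (FEq (TCat (TVar x) (TVar (fresh2 (TVar x) t))) (tsubsts \<sigma> t)))
    (fsubsts (\<sigma>(x := TVar x)) a))"
proof -
  have "tsubsts (\<sigma>(x := TVar x)) t = tsubsts \<sigma> t" using assms by (auto intro!: tsubsts_cong)
  then show ?thesis by (simp add: FBAll_def fsubsts_FSub)
qed

lemma teval_cong: "(\<And>z. z \<in> tvars t \<Longrightarrow> e z = e' z) \<Longrightarrow> teval e t = teval e' t"
  by (induction t) auto

lemma holds_FEx: "holds e (FEx x a) \<longleftrightarrow> (\<exists>v. holds (e(x := v)) a)"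
  by (simp add: FEx_def)

lemma holds_FSub: "holds e (FSub s t) \<longleftrightarrow> sq_prefix (teval e s) (teval e t)"
proof -
  have "teval (e(fresh2 s t := v)) r = teval e r" if "r \<in> {s, t}" for v r
    using fresh2_notin[of s t] that by (auto intro!: teval_cong)
  then show ?thesis by (simp add: FSub_def FEx_def sq_prefix_def)
qed

lemma proves_Sigma_numeral_instance:
  "Sigma \<phi> \<Longrightarrow> holds e \<phi> \<Longrightarrow> proves WSeq (fsubsts (\<lambda>z. numeral_sq (e z)) \<phi>)"
proof (induction \<phi> arbitrary: e rule: Sigma.induct)
  case (atom s t)
  then show ?case by (auto intro!: proves_eq_closed[where e = e])
next
  case (neg_atom s t)
  then show ?case by (auto intro!: proves_neq_closed[where e = e])
next
  case (sub s t)
  then show ?case by (auto simp: fsubsts_FSub holds_FSub intro!: proves_prefix_closed[where e = e])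
next
  case (neg_sub s t)
  then show ?case
    by (auto simp: fsubsts_FSub holds_FSub intro!: proves_not_prefix_closed[where e = e])
next
  case (conj a b)
  then have "proves WSeq (fsubsts (\<lambda>z. numeral_sq (e z)) a)"
    and "proves WSeq (fsubsts (\<lambda>z. numeral_sq (e z)) b)"
    by (auto simp: FConj_def)
  then show ?case unfolding FConj_def fsubsts.simps by (rule taut_consequence2[rotated]) auto
next
  case (disj a b)
  then consider "proves WSeq (fsubsts (\<lambda>z. numeral_sq (e z)) a)"
    | "proves WSeq (fsubsts (\<lambda>z. numeral_sq (e z)) b)"
    by (auto simp: FDisj_def)
  then show ?case
  proof cases
    case 1
    then show ?thesis unfolding FDisj_def fsubsts.simps by (rule taut_consequence1[rotated]) auto
  next
    case 2
    then show ?thesis unfolding FDisj_def fsubsts.simps by (rule taut_consequence1[rotated]) auto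
  qed
next
  case (ex a x)
  then obtain v where "holds (e(x := v)) a" by (auto simp: holds_FEx)
  then have "proves WSeq (fsubst (fsubsts ((\<lambda>z. numeral_sq (e z))(x := TVar x)) a) x (numeral_sq v))"
    unfolding fsubst_fsubsts_numeral by (rule ex.IH)
  then show ?case unfolding fsubsts_FEx by (rule proves_FEx_intro) (simp add: substitutable_closed)
next
  case (ball a x t)
  have "proves WSeq (fsubst (fsubsts ((\<lambda>z. numeral_sq (e z))(x := TVar x)) a) x (numeral_sq w))"
    if "sq_prefix w (teval e t)" for w
  proof -
    have "teval (e(x := w)) t = teval e t" using ball.hyps(2) by (auto intro!: teval_cong)
    then have "holds (e(x := w)) a"
      using ball.prems that by (simp add: FBAll_def holds_FSub)
    then show ?thesis unfolding fsubst_fsubsts_numeral by (rule ball.IH)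
  qed
  then show ?case
    using fresh2_notin(1)[of "TVar x" t] ball.hyps(2)
    by (simp add: fsubsts_FBAll) (rule proves_bounded_FAll[where e = e], auto)
qed

theorem theorem2:
  fixes \<phi> :: fm
  assumes "Sigma \<phi>" and "sentence \<phi>" and "true_in_S \<phi>"
  shows "proves WSeq \<phi>"
proof -
  let ?e = "\<lambda>_. Sq []"
  have "holds ?e \<phi>" using assms(3) by (simp add: true_in_S_def)
  with assms(1) have "proves WSeq (fsubsts (\<lambda>z. numeral_sq (?e z)) \<phi>)"
    by (rule proves_Sigma_numeral_instance)
  moreover have "fsubsts (\<lambda>z. numeral_sq (?e z)) \<phi> = \<phi>"
    using assms(2) by (intro fsubsts_id) (simp add: sentence_def)
  ultimately show ?thesis by simp
qed

end
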